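(* Let $Q=[(n,q),(\hat n,\hat q)]$ be a pointed irregular type with $q,\hat q$ compatible, and let $k=f_{q,\hat q}$. A list $Q'$ of pairs satisfies $Q'\sim Q$ if and only if $Q'=[(n,q'),(\hat n,\hat q')]$ where $q',\hat q'$ are compatible exponential factors in distinct Galois orbits such that (1) $\mathrm{Levels}(q')=\mathrm{Levels}(q)$ and $\mathrm{Levels}(\hat q')=\mathrm{Levels}(\hat q)$; (2) the common parts satisfy $\mathrm{Levels}(q'_c)=\mathrm{Levels}(q_c)$; (3) $f_{q',\hat q'}=k$. Moreover, (1)–(3) hold if and only if $\mathrm{Levels}(q')=\mathrm{Levels}(q)$, $\mathrm{Levels}(\hat q')=\mathrm{Levels}(\hat q)$ and $f_{q',\hat q'}=k$.
   Context: Exponential factors: finite sums $q=\sum_ka_kx^k$, $a_k\in\mathbb C$, $k\in\mathbb Q_{>0}$; $E(q)$ = set of exponents with $a_k\ne0$; $\mathrm{slope}(q)=\max E(q)$ ($0$ if $q=0$); $\mathrm{ram}(q)$ = least $r\ge1$ with $q\in x^{1/r}\mathbb C[x^{1/r}]$. Galois operator $\sigma(\sum a_kx^k)=\sum a_ke^{-2\pi\sqrt{-1}k}x^k$; Stokes circle $\langle q\rangle=\{\sigma^i(q)\}$. Truncation $\tau_k(\sum a_{k'}x^{k'})=\sum_{k'\ge k}a_{k'}x^{k'}$. $\mathrm{Levels}(q)=\{\mathrm{slope}(q-\sigma^i(q)):i\in\mathbb Z\}\setminus\{0\}$. Common part/fission exponent: for $q,\hat q$ in distinct orbits, if some $k\in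 E(q)$ has $\langle\tau_k(q)\rangle=\langle\tau_k(\hat q)\rangle$, let $k$ be the smallest, $q_c=\tau_k(q)$, $\hat q_c=\tau_k(\hat q)$; else $q_c=\hat q_c=0$. $f_{q,\hat q}=\max(\mathrm{slope}(q-q_c),\mathrm{slope}(\hat q-\hat q_c))$. Compatible means $q_c=\hat q_c$. A pointed irregular type is $[(n_1,q_1),\dots,(n_m,q_m)]$, $n_i\in\mathbb N_{>0}$, $q_i$ in pairwise distinct Galois orbits. For a list $Q'=[(n'_1,q'_1),\dots,(n'_p,q'_p)]$ ($n'_i\in\mathbb N_{>0}$, $q'_i$ exponential factors), $Q'\sim Q$ means $p=m$, $n'_i=n_i$, and $\mathrm{slope}(\sigma^k(q'_i)-\sigma^l(q'_j))=\mathrm{slope}(\sigma^k(q_i)-\sigma^l(q_j))$ for all $1\le i,j\le m$, $0\le k\le\mathrm{ram}(q_i)$, $0\le l\le\mathrm{ram}(q_j)$. *)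

theory Defs
  imports Complex_Main
begin

text \<open>An exponential factor sum a_k x^k is represented by its coefficient function
  rat => complex (k |-> a_k); it must have finite support contained in the positive rationals.\<close>

type_synonym efac = "rat \<Rightarrow> complex"

definition expos :: "efac \<Rightarrow> rat set" where
  "expos q = {k. q k \<noteq> 0}"

definition is_efac :: "efac \<Rightarrow> bool" where
  "is_efac q \<longleftrightarrow> finite (expos q) \<and> (\<forall>k\<in>expos q. k > 0)"

definition slope :: "efac \<Rightarrow> rat" where
  "slope q = (if expos q = {} then 0 else Max (expos q))"

definition ram :: "efac \<Rightarrow> nat" where
  "ram q = (LEAST r::nat. r \<ge> 1 \<and> (\<forall>k\<in>expos q. \<exists>m::int. k * of_nat r = of_int m))"

definition sigma :: "efac \<Rightarrow> efac" where
  "sigma q = (\<lambda>k. cis (- 2 * pi * real_of_rat k) * q k)"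

definition sigma_pow :: "int \<Rightarrow> efac \<Rightarrow> efac" where
  "sigma_pow i q = (if i \<ge> 0 then (sigma ^^ nat i) q else ((inv sigma) ^^ nat (- i)) q)"

definition stokes :: "efac \<Rightarrow> efac set" where
  "stokes q = {sigma_pow i q | i. True}"

definition trunc :: "rat \<Rightarrow> efac \<Rightarrow> efac" where
  "trunc k q = (\<lambda>k'. if k' \<ge> k then q k' else 0)"

definition levels :: "efac \<Rightarrow> rat set" where
  "levels q = {slope (q - sigma_pow i q) | i. True} - {0}"

definition common_exists :: "efac \<Rightarrow> efac \<Rightarrow> bool" where
  "common_exists q qh \<longleftrightarrow> (\<exists>k\<in>expos q. stokes (trunc k q) = stokes (trunc k qh))"

definition common_exp :: "efac \<Rightarrow> efac \<Rightarrow> rat" where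
  "common_exp q qh = (LEAST k. k \<in> expos q \<and> stokes (trunc k q) = stokes (trunc k qh))"

definition common_part :: "efac \<Rightarrow> efac \<Rightarrow> efac \<times> efac" where
  "common_part q qh = (if common_exists q qh
     then (trunc (common_exp q qh) q, trunc (common_exp q qh) qh) else ((\<lambda>_. 0), (\<lambda>_. 0)))"

definition fission :: "efac \<Rightarrow> efac \<Rightarrow> rat" where
  "fission q qh = max (slope (q - fst (common_part q qh))) (slope (qh - snd (common_part q qh)))"

definition compatible :: "efac \<Rightarrow> efac \<Rightarrow> bool" where
  "compatible q qh \<longleftrightarrow> fst (common_part q qh) = snd (common_part q qh)"

definition distinct_orbits :: "efac \<Rightarrow> efac \<Rightarrow> bool" where
  "distinct_orbits q qh \<longleftrightarrow> stokes q \<noteq> stokes qh"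

definition wf_list :: "(nat \<times> efac) list \<Rightarrow> bool" where
  "wf_list Q \<longleftrightarrow> (\<forall>p\<in>set Q. fst p > 0 \<and> is_efac (snd p))"

definition pointed_irr_type :: "(nat \<times> efac) list \<Rightarrow> bool" where
  "pointed_irr_type Q \<longleftrightarrow> wf_list Q \<and>
     (\<forall>i<length Q. \<forall>j<length Q. i \<noteq> j \<longrightarrow> distinct_orbits (snd (Q!i)) (snd (Q!j)))"

definition irr_equiv :: "(nat \<times> efac) list \<Rightarrow> (nat \<times> efac) list \<Rightarrow> bool" where
  "irr_equiv Q' Q \<longleftrightarrow> length Q' = length Q \<and>
     (\<forall>i<length Q. fst (Q'!i) = fst (Q!i)) \<and>
     (\<forall>i<length Q. \<forall>j<length Q. \<forall>k\<le>ram (snd (Q!i)). \<forall>l\<le>ram (snd (Q!j)).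
        slope (sigma_pow (int k) (snd (Q'!i)) - sigma_pow (int l) (snd (Q'!j)))
          = slope (sigma_pow (int k) (snd (Q!i)) - sigma_pow (int l) (snd (Q!j))))"

end

theory Submission
  imports Defs
begin

text \<open>For compatible \<open>q, qh\<close> with common part \<open>c\<close> and fission exponent \<open>f\<close>, every relative slope
  \<open>slope (\<sigma>\<^sup>d q - qh)\<close> equals \<open>max (slope (\<sigma>\<^sup>d q - q)) f\<close>: above the common exponent \<open>q\<close> and \<open>qh\<close>
  agree, and below it they differ at slope exactly \<open>f\<close> whenever \<open>\<sigma>\<^sup>d\<close> fixes \<open>c\<close>. Moreover
  \<open>slope (\<sigma>\<^sup>d q - q)\<close> is the largest level of \<open>q\<close> moved by \<open>\<sigma>\<^sup>d\<close>, and the levels of \<open>c\<close> are the levels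
  of \<open>q\<close> above \<open>f\<close>. So levels and fission exponent determine all relative slopes, which gives one
  direction and makes condition (2) redundant. Conversely, the finitely many slopes in \<open>Q' \<sim> Q\<close>
  determine all relative slopes by periodicity of \<open>\<sigma>\<close>; the levels and the fission exponent are
  read off from them, and compatibility of \<open>q', qh'\<close> follows since otherwise the aligned relative
  slope of \<open>q', qh'\<close> would drop below \<open>f\<close>.\<close>

section \<open>The Galois action on coefficients\<close>

definition zeta :: "int \<Rightarrow> rat \<Rightarrow> complex" where
  "zeta j m = cis (- 2 * pi * real_of_rat m * of_int j)"

lemma zeta_add: "zeta (a + b) m = zeta a m * zeta b m"
  unfolding zeta_def by (simp add: cis_mult algebra_simps)

lemma zeta_0 [simp]: "zeta 0 m = 1"
  unfolding zeta_def by simp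

lemma zeta_nonzero [simp]: "zeta j m \<noteq> 0"
  unfolding zeta_def by simp

lemma zeta_eq_1_if_Ints: "m * of_int r \<in> \<int> \<Longrightarrow> zeta r m = 1"
proof -
  assume "m * of_int r \<in> \<int>"
  then obtain z where z: "m * of_int r = of_int z" by (auto elim: Ints_cases)
  have "real_of_rat m * of_int r = of_int z"
    using arg_cong[OF z, of real_of_rat] by (simp add: of_rat_mult)
  then have "- 2 * pi * real_of_rat m * of_int r = 2 * pi * of_int (- z)"
    by (simp add: algebra_simps)
  then show ?thesis
    unfolding zeta_def by (metis cis_multiple_2pi Ints_of_int)
qed

lemma sigma_eq: "sigma q = (\<lambda>m. zeta 1 m * q m)"
  unfolding sigma_def zeta_def by simp

lemma funpow_sigma: "(sigma ^^ n) q = (\<lambda>m. zeta (int n) m * q m)"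
proof (induction n)
  case (Suc n)
  have "(sigma ^^ Suc n) q = (\<lambda>m. zeta 1 m * (zeta (int n) m * q m))"
    by (simp only: funpow.simps comp_apply Suc sigma_eq)
  also have "\<dots> = (\<lambda>m. zeta (int (Suc n)) m * q m)"
    by (rule ext) (simp only: of_nat_Suc add.commute[of "int n" 1] zeta_add mult.assoc)
  finally show ?case .
qed simp

lemma inv_sigma: "inv sigma = (\<lambda>q m. zeta (-1) m * q m)"
proof (rule inv_equality)
  fix x show "(\<lambda>m. zeta (-1) m * sigma x m) = x"
    by (rule ext) (simp only: sigma_eq mult.assoc[symmetric] zeta_add[symmetric], simp)
next
  fix y show "sigma (\<lambda>m. zeta (-1) m * y m) = y"
    by (rule ext) (simp only: sigma_eq mult.assoc[symmetric] zeta_add[symmetric], simp)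
qed

lemma funpow_inv_sigma: "(inv sigma ^^ n) q = (\<lambda>m. zeta (- int n) m * q m)"
proof (induction n)
  case (Suc n)
  have "(inv sigma ^^ Suc n) q = inv sigma ((inv sigma ^^ n) q)" by simp
  also have "\<dots> = (\<lambda>m. zeta (-1) m * (zeta (- int n) m * q m))"
    by (simp only: Suc) (simp only: inv_sigma)
  also have "\<dots> = (\<lambda>m. zeta (- int (Suc n)) m * q m)"
    by (rule ext) (simp only: mult.assoc[symmetric] zeta_add[symmetric], simp)
  finally show ?case .
qed simp

lemma sigma_pow_eq: "sigma_pow j q = (\<lambda>m. zeta j m * q m)"
  unfolding sigma_pow_def by (simp add: funpow_sigma funpow_inv_sigma)

lemma sigma_pow_0 [simp]: "sigma_pow 0 q = q"
  by (simp add: sigma_pow_eq)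

lemma sigma_pow_sigma_pow: "sigma_pow a (sigma_pow b x) = sigma_pow (a + b) x"
  by (simp add: sigma_pow_eq zeta_add fun_eq_iff mult.assoc)

lemma stokes_sigma_pow: "stokes (sigma_pow j x) = stokes x"
  unfolding stokes_def sigma_pow_sigma_pow by (auto, metis add.commute diff_add_cancel)

lemma stokes_eqD: "stokes x = stokes y \<Longrightarrow> \<exists>j. y = sigma_pow j x"
proof -
  assume "stokes x = stokes y"
  moreover have "y \<in> stokes y" unfolding stokes_def by (auto intro: exI[of _ 0])
  ultimately show ?thesis unfolding stokes_def by auto
qed

lemma sigma_pow_mod:
  assumes "sigma_pow r x = x"
  shows "sigma_pow d x = sigma_pow (d mod r) x"
proof -
  have "sigma_pow (a + r * t) x = sigma_pow a x" for a t
  proof (induction t arbitrary: a rule: int_induct[where k = 0])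
    case (step1 i)
    have "sigma_pow (a + r * (i + 1)) x = sigma_pow (a + r * i) (sigma_pow r x)"
      by (simp add: sigma_pow_sigma_pow algebra_simps)
    then show ?case using step1 assms by simp
  next
    case (step2 i)
    have "sigma_pow (a + r * i) x = sigma_pow (a + r * (i - 1)) (sigma_pow r x)"
      by (simp add: sigma_pow_sigma_pow algebra_simps)
    then show ?case using step2 assms by simp
  qed simp
  from this[of "d mod r" "d div r"] show ?thesis by (simp add: mod_mult_div_eq)
qed

section \<open>Slopes\<close>

lemma expos_iff: "k \<in> expos q \<longleftrightarrow> q k \<noteq> 0"
  by (simp add: expos_def)

lemma slope_ge: "finite (expos d) \<Longrightarrow> d m \<noteq> 0 \<Longrightarrow> m \<le> slope d"
  unfolding slope_def by (auto simp: expos_iff)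

lemma coeff_above_slope: "finite (expos d) \<Longrightarrow> slope d < m \<Longrightarrow> d m = 0"
  using slope_ge by fastforce

lemma coeff_slope_nonzero: "finite (expos d) \<Longrightarrow> d \<noteq> (\<lambda>_. 0) \<Longrightarrow> d (slope d) \<noteq> 0"
proof -
  assume f: "finite (expos d)" and "d \<noteq> (\<lambda>_. 0)"
  then have ne: "expos d \<noteq> {}" by (auto simp: expos_iff fun_eq_iff)
  then have "slope d = Max (expos d)" by (simp add: slope_def)
  also have "\<dots> \<in> expos d" using f ne by simp
  finally show ?thesis by (simp add: expos_iff)
qed

lemma slope_eqI:
  assumes f: "finite (expos d)" and ds: "d s \<noteq> 0" and above: "\<And>m. s < m \<Longrightarrow> d m = 0"
  shows "slope d = s"
proof -
  have "d (slope d) \<noteq> 0" using coeff_slope_nonzero f ds by blast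
  then have "\<not> s < slope d" using above by blast
  moreover have "s \<le> slope d" using slope_ge f ds by blast
  ultimately show ?thesis by simp
qed

lemma slope_zero_fun [simp]: "slope (\<lambda>_. 0) = 0"
  by (simp add: slope_def expos_def)

lemma diff_self_efac [simp]: "(x::efac) - x = (\<lambda>_. 0)"
  by (simp add: fun_eq_iff)

lemma slope_nonneg: "is_efac d \<Longrightarrow> 0 \<le> slope d"
  unfolding is_efac_def slope_def
  by (auto intro: order.strict_implies_order[THEN order.trans] Max_ge)

lemma slope_eq_0_iff: "is_efac d \<Longrightarrow> slope d = 0 \<longleftrightarrow> d = (\<lambda>_. 0)"
proof
  assume e: "is_efac d" and s: "slope d = 0"
  show "d = (\<lambda>_. 0)"
  proof (rule ccontr)
    assume "d \<noteq> (\<lambda>_. 0)"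
    then have "slope d \<in> expos d"
      using coeff_slope_nonzero e by (simp add: is_efac_def expos_iff)
    then show False using e s unfolding is_efac_def by fastforce
  qed
qed simp

lemma slope_cong: "expos a = expos b \<Longrightarrow> slope a = slope b"
  by (simp add: slope_def)

lemma slope_mono: "is_efac b \<Longrightarrow> expos a \<subseteq> expos b \<Longrightarrow> slope a \<le> slope b"
proof (cases "a = (\<lambda>_. 0)")
  case False
  assume e: "is_efac b" and sub: "expos a \<subseteq> expos b"
  then have "finite (expos a)" by (auto simp: is_efac_def intro: finite_subset)
  then have "a (slope a) \<noteq> 0" using False coeff_slope_nonzero by blast
  then have "b (slope a) \<noteq> 0" using sub by (auto simp: expos_iff)
  then show ?thesis using slope_ge e by (auto simp: is_efac_def)
qed (simp add: slope_nonneg)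

lemma slope_scale: "(\<And>m. c m \<noteq> 0) \<Longrightarrow> slope (\<lambda>m. c m * d m) = slope d"
  by (rule slope_cong) (auto simp: expos_iff)

lemma slope_diff_commute: "slope (x - y) = slope (y - x)"
  by (rule slope_cong) (auto simp: expos_iff)

lemma is_efac_subset: "is_efac x \<Longrightarrow> (\<And>m. y m \<noteq> 0 \<Longrightarrow> x m \<noteq> 0) \<Longrightarrow> is_efac y"
proof -
  assume a: "is_efac x" and h: "\<And>m. y m \<noteq> 0 \<Longrightarrow> x m \<noteq> 0"
  have "expos y \<subseteq> expos x" using h by (auto simp: expos_iff)
  then show ?thesis using a unfolding is_efac_def by (auto intro: finite_subset)
qed

lemma is_efac_diff: "is_efac x \<Longrightarrow> is_efac y \<Longrightarrow> is_efac (x - y)"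
proof -
  assume a: "is_efac x" "is_efac y"
  have "expos (x - y) \<subseteq> expos x \<union> expos y" by (auto simp: expos_iff)
  then show ?thesis using a unfolding is_efac_def by (auto intro: finite_subset)
qed

lemma is_efac_sigma_pow: "is_efac x \<Longrightarrow> is_efac (sigma_pow j x)"
  by (erule is_efac_subset) (simp add: sigma_pow_eq)

lemma is_efac_trunc: "is_efac x \<Longrightarrow> is_efac (trunc k x)"
  by (erule is_efac_subset) (simp add: trunc_def split: if_splits)

lemma is_efac_finite: "is_efac x \<Longrightarrow> finite (expos x)"
  by (simp add: is_efac_def)

lemma is_efac_pos: "is_efac x \<Longrightarrow> x m \<noteq> 0 \<Longrightarrow> 0 < m"
  by (auto simp: is_efac_def expos_iff)

lemma slope_add_separated:
  assumes fA: "finite (expos A)" and fB: "finite (expos B)" and nA: "A \<noteq> (\<lambda>_. 0)"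
    and hA: "\<And>m. A m \<noteq> 0 \<Longrightarrow> k \<le> m" and hB: "\<And>m. B m \<noteq> 0 \<Longrightarrow> m < k"
  shows "slope (\<lambda>m. A m + B m) = slope A"
proof (rule slope_eqI)
  have "expos (\<lambda>m. A m + B m) \<subseteq> expos A \<union> expos B" by (auto simp: expos_iff)
  then show "finite (expos (\<lambda>m. A m + B m))" using fA fB by (auto intro: finite_subset)
  have As: "A (slope A) \<noteq> 0" using coeff_slope_nonzero fA nA by blast
  then have k: "k \<le> slope A" using hA by blast
  then have "B (slope A) = 0" using hB by force
  then show "A (slope A) + B (slope A) \<noteq> 0" using As by simp
  fix m assume "slope A < m"
  then show "A m + B m = 0" using coeff_above_slope[OF fA] hB k by force
qed

lemma ram_period: "is_efac x \<Longrightarrow> 1 \<le> ram x \<and> sigma_pow (int (ram x)) x = x"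
proof -
  assume e: "is_efac x"
  define R where "R = (\<Prod>k\<in>expos x. nat (snd (quotient_of k)))"
  have "1 \<le> R" unfolding R_def
    by (rule prod_ge_1) (use quotient_of_denom_pos' in \<open>simp add: Suc_le_eq\<close>)
  moreover have "\<forall>k\<in>expos x. \<exists>m::int. k * of_nat R = of_int m"
  proof
    fix k assume k: "k \<in> expos x"
    obtain a b where ab: "quotient_of k = (a, b)" by fastforce
    have "R = nat b * (\<Prod>k\<in>expos x - {k}. nat (snd (quotient_of k)))"
      unfolding R_def using k is_efac_finite[OF e] by (simp add: prod.remove ab)
    then have "k * of_nat R = of_int a * of_nat (\<Prod>k\<in>expos x - {k}. nat (snd (quotient_of k)))"
      using quotient_of_div[OF ab] quotient_of_denom_pos[OF ab] by (simp add: of_nat_mult)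
    then show "\<exists>m::int. k * of_nat R = of_int m" by (metis of_int_mult of_int_of_nat_eq)
  qed
  ultimately have "\<exists>r::nat. r \<ge> 1 \<and> (\<forall>k\<in>expos x. \<exists>m::int. k * of_nat r = of_int m)"
    by blast
  from LeastI_ex[OF this]
  have P: "ram x \<ge> 1 \<and> (\<forall>k\<in>expos x. \<exists>m::int. k * of_nat (ram x) = of_int m)"
    unfolding ram_def .
  have "zeta (int (ram x)) m * x m = x m" for m
  proof (cases "x m = 0")
    case False
    then obtain z :: int where "m * of_nat (ram x) = of_int z" using P unfolding expos_def by blast
    then have "zeta (int (ram x)) m = 1" by (intro zeta_eq_1_if_Ints) simp
    then show ?thesis by simp
  qed simp
  then show ?thesis using P by (simp add: sigma_pow_eq fun_eq_iff del: mult_cancel_right2)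
qed

section \<open>Relative slopes\<close>

definition rel_slope :: "efac \<Rightarrow> efac \<Rightarrow> int \<Rightarrow> rat" where
  "rel_slope x y d = slope (sigma_pow d x - y)"

lemma slope_sigma_pow_diff: "slope (sigma_pow a x - sigma_pow b y) = rel_slope x y (a - b)"
proof -
  have "sigma_pow a x - sigma_pow b y = (\<lambda>m. zeta b m * (sigma_pow (a - b) x - y) m)"
  proof
    fix m
    have "zeta a m = zeta b m * zeta (a - b) m" using zeta_add[of b "a - b" m] by simp
    then show "(sigma_pow a x - sigma_pow b y) m = zeta b m * (sigma_pow (a - b) x - y) m"
      by (simp add: sigma_pow_eq algebra_simps)
  qed
  then show ?thesis unfolding rel_slope_def by (metis slope_scale zeta_nonzero)
qed

lemma rel_slope_self_0 [simp]: "rel_slope x x 0 = 0"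
  by (simp add: rel_slope_def)

lemma rel_slope_commute: "rel_slope y x d = rel_slope x y (- d)"
proof -
  have "rel_slope y x d = slope (sigma_pow 0 x - sigma_pow d y)"
    unfolding rel_slope_def by (simp add: slope_diff_commute)
  then show ?thesis using slope_sigma_pow_diff[of 0 x d y] by simp
qed

lemma rel_slope_nonneg: "is_efac x \<Longrightarrow> is_efac y \<Longrightarrow> 0 \<le> rel_slope x y d"
  unfolding rel_slope_def by (intro slope_nonneg is_efac_diff is_efac_sigma_pow)

lemma rel_slope_eq_0_iff: "is_efac x \<Longrightarrow> is_efac y \<Longrightarrow> rel_slope x y d = 0 \<longleftrightarrow> y = sigma_pow d x"
  unfolding rel_slope_def
  by (subst slope_eq_0_iff) (auto simp: is_efac_diff is_efac_sigma_pow fun_eq_iff)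

lemma rel_slope_mod: "sigma_pow r x = x \<Longrightarrow> rel_slope x y d = rel_slope x y (d mod r)"
  unfolding rel_slope_def by (metis sigma_pow_mod)

lemma levels_eq_rel_slope: "levels z = {rel_slope z z i | i. True} - {0}"
  unfolding levels_def rel_slope_def by (simp add: slope_diff_commute)

lemma levels_subset_expos: "is_efac x \<Longrightarrow> levels x \<subseteq> expos x"
proof
  fix v assume e: "is_efac x" and "v \<in> levels x"
  then obtain i where v: "v = slope (sigma_pow i x - x)" "v \<noteq> 0"
    unfolding levels_eq_rel_slope rel_slope_def by auto
  then have "sigma_pow i x - x \<noteq> (\<lambda>_. 0)" by auto
  then have "(sigma_pow i x - x) v \<noteq> 0"
    using coeff_slope_nonzero is_efac_finite is_efac_diff is_efac_sigma_pow e v(1) by blast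
  then show "v \<in> expos x" by (auto simp: sigma_pow_eq expos_iff)
qed

lemma slope_sigma_pow_diff_max:
  assumes e: "is_efac L" "is_efac Lh"
    and top: "slope L = slope Lh \<Longrightarrow> 0 < slope L \<Longrightarrow> zeta j (slope L) * L (slope L) \<noteq> Lh (slope L)"
  shows "slope (sigma_pow j L - Lh) = max (slope L) (slope Lh)"
proof -
  define s where "s = max (slope L) (slope Lh)"
  define D where "D = sigma_pow j L - Lh"
  have D: "\<And>m. D m = zeta j m * L m - Lh m" by (simp add: D_def sigma_pow_eq)
  have fD: "finite (expos D)" unfolding D_def using is_efac_finite is_efac_diff is_efac_sigma_pow e by blast
  have fL: "finite (expos L)" "finite (expos Lh)" using e is_efac_finite by auto
  have n: "0 \<le> slope L" "0 \<le> slope Lh" using e slope_nonneg by auto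
  show ?thesis
  proof (cases "s = 0")
    case True
    then have "slope L = 0" "slope Lh = 0" using n unfolding s_def by linarith+
    then have "L = (\<lambda>_. 0)" "Lh = (\<lambda>_. 0)" using slope_eq_0_iff e by blast+
    then show ?thesis by (simp add: sigma_pow_eq fun_diff_def)
  next
    case False
    have "D s \<noteq> 0"
    proof (cases "slope L = slope Lh")
      case True
      then show ?thesis using top False n unfolding s_def by (simp add: D)
    next
      case False
      then consider "slope Lh < slope L" | "slope L < slope Lh" by linarith
      then show ?thesis
      proof cases
        case 1
        then have "L s \<noteq> 0" "Lh s = 0"
          using coeff_slope_nonzero coeff_above_slope fL n \<open>s \<noteq> 0\<close> unfolding s_def by force+
        then show ?thesis by (simp add: D)
      next
        case 2
        then have "Lh s \<noteq> 0" "L s = 0"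
          using coeff_slope_nonzero coeff_above_slope fL n \<open>s \<noteq> 0\<close> unfolding s_def by force+
        then show ?thesis by (simp add: D)
      qed
    qed
    moreover have "D m = 0" if "s < m" for m
      using coeff_above_slope[OF fL(1)] coeff_above_slope[OF fL(2)] that unfolding s_def by (simp add: D)
    ultimately show ?thesis using slope_eqI fD unfolding s_def D_def by blast
  qed
qed

section \<open>Common parts and the fission exponent\<close>

definition trunc_below :: "rat \<Rightarrow> efac \<Rightarrow> efac" where
  "trunc_below k x = (\<lambda>m. if k \<le> m then 0 else x m)"

lemma is_efac_trunc_below: "is_efac x \<Longrightarrow> is_efac (trunc_below k x)"
  by (erule is_efac_subset) (simp add: trunc_below_def split: if_splits)

lemma diff_trunc: "x - trunc k x = trunc_below k x"
  by (simp add: fun_eq_iff trunc_def trunc_below_def)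

lemma slope_trunc_below_less: "is_efac x \<Longrightarrow> 0 < k \<Longrightarrow> slope (trunc_below k x) < k"
proof (cases "trunc_below k x = (\<lambda>_. 0)")
  case False
  assume "is_efac x"
  then have "trunc_below k x (slope (trunc_below k x)) \<noteq> 0"
    using False coeff_slope_nonzero is_efac_finite is_efac_trunc_below by blast
  then show ?thesis by (auto simp: trunc_below_def split: if_splits)
qed simp

lemma stokes_trunc_eqI:
  assumes "\<And>m. t \<le> m \<Longrightarrow> zeta j m * p m = ph m"
  shows "stokes (trunc t p) = stokes (trunc t ph)"
proof -
  have "sigma_pow j (trunc t p) = trunc t ph"
    using assms by (simp add: fun_eq_iff sigma_pow_eq trunc_def)
  then show ?thesis by (metis stokes_sigma_pow)
qed

lemma common_exp_props:
  assumes e: "is_efac p" and ce: "common_exists p ph"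
  shows "common_exp p ph \<in> expos p"
    and "stokes (trunc (common_exp p ph) p) = stokes (trunc (common_exp p ph) ph)"
    and "\<And>t. t \<in> expos p \<Longrightarrow> t < common_exp p ph \<Longrightarrow> stokes (trunc t p) \<noteq> stokes (trunc t ph)"
proof -
  define S where "S = {k \<in> expos p. stokes (trunc k p) = stokes (trunc k ph)}"
  have fS: "finite S" unfolding S_def using is_efac_finite[OF e] by simp
  have "S \<noteq> {}" using ce unfolding S_def common_exists_def by blast
  then have MS: "Min S \<in> S" using fS by simp
  have k: "common_exp p ph = Min S" unfolding common_exp_def
    by (rule Least_equality) (use MS fS in \<open>auto simp: S_def\<close>)
  then show "common_exp p ph \<in> expos p"
    and "stokes (trunc (common_exp p ph) p) = stokes (trunc (common_exp p ph) ph)"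
    using MS by (simp_all add: S_def)
  fix t assume "t \<in> expos p" "t < common_exp p ph"
  then show "stokes (trunc t p) \<noteq> stokes (trunc t ph)"
    using fS k by (auto simp: S_def dest: Min_le)
qed

lemma common_part_split:
  assumes e: "is_efac p" "is_efac ph" and ce: "common_exists p ph"
  defines "k \<equiv> common_exp p ph"
  shows "fst (common_part p ph) = trunc k p" "snd (common_part p ph) = trunc k ph"
    and "0 < k" "fission p ph = max (slope (trunc_below k p)) (slope (trunc_below k ph))"
    and "fission p ph < k" "stokes (trunc k p) = stokes (trunc k ph)"
    and "\<And>t. t \<in> expos p \<Longrightarrow> t < k \<Longrightarrow> stokes (trunc t p) \<noteq> stokes (trunc t ph)"
proof -
  show parts: "fst (common_part p ph) = trunc k p" "snd (common_part p ph) = trunc k ph"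
    using ce unfolding common_part_def k_def by simp_all
  show k: "0 < k" using common_exp_props(1)[OF e(1) ce] e(1) by (auto simp: is_efac_def k_def)
  show f: "fission p ph = max (slope (trunc_below k p)) (slope (trunc_below k ph))"
    unfolding fission_def parts diff_trunc ..
  show "fission p ph < k" unfolding f using slope_trunc_below_less e k by simp
  show "stokes (trunc k p) = stokes (trunc k ph)"
    and "\<And>t. t \<in> expos p \<Longrightarrow> t < k \<Longrightarrow> stokes (trunc t p) \<noteq> stokes (trunc t ph)"
    using common_exp_props[OF e(1) ce] unfolding k_def by blast+
qed

lemma common_part_none:
  assumes "\<not> common_exists p ph"
  shows "fst (common_part p ph) = (\<lambda>_. 0)" "snd (common_part p ph) = (\<lambda>_. 0)"
    and "fission p ph = max (slope p) (slope ph)"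
proof -
  show parts: "fst (common_part p ph) = (\<lambda>_. 0)" "snd (common_part p ph) = (\<lambda>_. 0)"
    using assms unfolding common_part_def by simp_all
  have "p - (\<lambda>_. 0) = p" "ph - (\<lambda>_. 0) = ph" by (simp_all add: fun_eq_iff)
  then show "fission p ph = max (slope p) (slope ph)" unfolding fission_def parts by simp
qed

text \<open>If \<open>\<sigma>\<^sup>j p\<close> and \<open>ph\<close> agree from \<open>k\<close> on, their leading terms below \<open>k\<close> cannot cancel: such a
  cancellation at \<open>t < k\<close> would make \<open>trunc t p\<close> and \<open>trunc t ph\<close> Galois conjugate.\<close>

lemma rel_slope_agree_above:
  assumes e: "is_efac p" "is_efac ph"
    and above: "\<And>m. k \<le> m \<Longrightarrow> zeta j m * p m = ph m"
    and minimal: "\<And>t. t \<in> expos p \<Longrightarrow> t < k \<Longrightarrow> stokes (trunc t p) \<noteq> stokes (trunc t ph)"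
  shows "rel_slope p ph j = max (slope (trunc_below k p)) (slope (trunc_below k ph))"
proof -
  define L where "L = trunc_below k p"
  define Lh where "Lh = trunc_below k ph"
  have eL: "is_efac L" "is_efac Lh" unfolding L_def Lh_def using e is_efac_trunc_below by auto
  have fL: "finite (expos L)" "finite (expos Lh)" using eL is_efac_finite by auto
  have "sigma_pow j p - ph = sigma_pow j L - Lh"
    by (rule ext) (simp add: sigma_pow_eq L_def Lh_def trunc_below_def above)
  moreover have "slope (sigma_pow j L - Lh) = max (slope L) (slope Lh)"
  proof (rule slope_sigma_pow_diff_max[OF eL], rule notI)
    assume s: "slope L = slope Lh" "0 < slope L"
      and cancel: "zeta j (slope L) * L (slope L) = Lh (slope L)"
    define t where "t = slope L"
    have "L t \<noteq> 0" using s coeff_slope_nonzero fL t_def by fastforce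
    then have tk: "t < k" and pt: "p t \<noteq> 0" by (auto simp: L_def trunc_below_def split: if_splits)
    have "zeta j m * p m = ph m" if "t \<le> m" for m
    proof (cases "k \<le> m")
      case False
      show ?thesis
      proof (cases "m = t")
        case False
        then have "L m = 0" "Lh m = 0" using that coeff_above_slope fL s t_def by auto
        then show ?thesis using \<open>\<not> k \<le> m\<close> by (simp add: L_def Lh_def trunc_below_def)
      qed (use cancel tk in \<open>simp add: L_def Lh_def trunc_below_def t_def\<close>)
    qed (rule above)
    then have "stokes (trunc t p) = stokes (trunc t ph)" by (rule stokes_trunc_eqI)
    with minimal[of t] pt tk show False by (simp add: expos_iff)
  qed
  ultimately show ?thesis unfolding rel_slope_def L_def Lh_def by simp
qed

lemma rel_slope_eq_fission:
  assumes e: "is_efac p" "is_efac ph"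
    and aligned: "sigma_pow j (fst (common_part p ph)) = snd (common_part p ph)"
  shows "rel_slope p ph j = fission p ph"
proof (cases "common_exists p ph")
  case True
  note split = common_part_split[OF e True]
  have "zeta j m * p m = ph m" if "common_exp p ph \<le> m" for m
    using fun_cong[OF aligned, of m] that split(1,2) by (simp add: sigma_pow_eq trunc_def)
  from rel_slope_agree_above[OF e this split(7)] show ?thesis using split(4) by simp
next
  case False
  define k where "k = max (slope p) (slope ph) + 1"
  have fin: "finite (expos p)" "finite (expos ph)" using e is_efac_finite by auto
  have "zeta j m * p m = ph m" if "k \<le> m" for m
    using coeff_above_slope[OF fin(1)] coeff_above_slope[OF fin(2)] that unfolding k_def by simp
  moreover have "stokes (trunc t p) \<noteq> stokes (trunc t ph)" if "t \<in> expos p" for t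
    using False that unfolding common_exists_def by blast
  ultimately have "rel_slope p ph j = max (slope (trunc_below k p)) (slope (trunc_below k ph))"
    by (rule rel_slope_agree_above[OF e])
  moreover have "trunc_below k p = p" "trunc_below k ph = ph"
    using coeff_above_slope[OF fin(1)] coeff_above_slope[OF fin(2)]
    unfolding k_def trunc_below_def by (auto simp: fun_eq_iff)
  ultimately show ?thesis using common_part_none(3)[OF False] by simp
qed

lemma fission_less_rel_slope:
  assumes e: "is_efac p" "is_efac ph"
    and misaligned: "sigma_pow j (fst (common_part p ph)) \<noteq> snd (common_part p ph)"
  shows "fission p ph < rel_slope p ph j"
proof (cases "common_exists p ph")
  case True
  note split = common_part_split[OF e True]
  define k where "k = common_exp p ph"
  obtain m where m: "sigma_pow j (trunc k p) m \<noteq> trunc k ph m"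
    using misaligned split(1,2) unfolding k_def by auto
  then have km: "k \<le> m" by (auto simp: sigma_pow_eq trunc_def split: if_splits)
  have "(sigma_pow j p - ph) m \<noteq> 0" using m km by (simp add: sigma_pow_eq trunc_def)
  then have "m \<le> rel_slope p ph j"
    unfolding rel_slope_def using slope_ge is_efac_finite is_efac_diff is_efac_sigma_pow e by blast
  then show ?thesis using split(5) km unfolding k_def by simp
qed (use misaligned common_part_none in \<open>simp add: sigma_pow_eq\<close>)

lemma rel_slope_agree_below:
  assumes e: "is_efac x" "is_efac y" and agree: "\<And>m. k \<le> m \<Longrightarrow> y m = x m"
    and moved: "sigma_pow d (trunc k x) \<noteq> trunc k x"
  shows "rel_slope x y d = rel_slope (trunc k x) (trunc k x) d" and "k \<le> rel_slope x y d"
proof -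
  define A where "A = sigma_pow d (trunc k x) - trunc k x"
  define B where "B = sigma_pow d (trunc_below k x) - trunc_below k y"
  have split: "sigma_pow d x - y = (\<lambda>m. A m + B m)"
    by (rule ext) (simp add: A_def B_def sigma_pow_eq trunc_below_def trunc_def agree)
  have nA: "A \<noteq> (\<lambda>_. 0)" using moved unfolding A_def by (auto simp: fun_eq_iff)
  have fA: "finite (expos A)" unfolding A_def
    by (intro is_efac_finite is_efac_diff is_efac_sigma_pow is_efac_trunc e)
  have A_upper: "\<And>m. A m \<noteq> 0 \<Longrightarrow> k \<le> m"
    unfolding A_def by (auto simp: sigma_pow_eq trunc_def split: if_splits)
  have "slope (\<lambda>m. A m + B m) = slope A"
  proof (rule slope_add_separated[OF fA _ nA A_upper])
    show "finite (expos B)" unfolding B_def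
      by (intro is_efac_finite is_efac_diff is_efac_sigma_pow is_efac_trunc_below e)
    show "\<And>m. B m \<noteq> 0 \<Longrightarrow> m < k"
      unfolding B_def by (auto simp: sigma_pow_eq trunc_below_def split: if_splits)
  qed
  then show eq: "rel_slope x y d = rel_slope (trunc k x) (trunc k x) d"
    unfolding rel_slope_def split A_def .
  obtain m where "A m \<noteq> 0" using nA by auto
  then have "k \<le> m" "m \<le> slope A" using A_upper slope_ge fA by auto
  then show "k \<le> rel_slope x y d" using eq unfolding rel_slope_def A_def by simp
qed

lemma rel_slope_self_le_fission:
  assumes e: "is_efac x" "is_efac y"
    and fixed: "sigma_pow i (fst (common_part x y)) = fst (common_part x y)"
  shows "rel_slope x x i \<le> fission x y"
proof (cases "common_exists x y")
  case True
  note split = common_part_split[OF e True]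
  define L where "L = trunc_below (common_exp x y) x"
  have "zeta i m * x m = x m" if "common_exp x y \<le> m" for m
    using fun_cong[OF fixed, of m] that split(1) by (simp add: sigma_pow_eq trunc_def)
  then have "sigma_pow i x - x = sigma_pow i L - L"
    by (auto simp: fun_eq_iff sigma_pow_eq L_def trunc_below_def)
  moreover have "expos (sigma_pow i L - L) \<subseteq> expos L" by (auto simp: expos_iff sigma_pow_eq)
  then have "slope (sigma_pow i L - L) \<le> slope L"
    using slope_mono is_efac_trunc_below e unfolding L_def by blast
  ultimately show ?thesis unfolding rel_slope_def split(4) L_def by simp
next
  case False
  have "expos (sigma_pow i x - x) \<subseteq> expos x" by (auto simp: expos_iff sigma_pow_eq)
  then have "slope (sigma_pow i x - x) \<le> slope x" using slope_mono e(1) by blast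
  then show ?thesis unfolding rel_slope_def common_part_none(3)[OF False] by simp
qed

lemma rel_slope_self_moved:
  assumes e: "is_efac x" "is_efac y"
    and moved: "sigma_pow i (fst (common_part x y)) \<noteq> fst (common_part x y)"
  shows "common_exists x y"
    and "rel_slope x x i = rel_slope (fst (common_part x y)) (fst (common_part x y)) i"
    and "fission x y < rel_slope x x i"
proof -
  show ce: "common_exists x y"
  proof (rule ccontr)
    assume "\<not> common_exists x y"
    then show False using moved common_part_none(1) by (simp add: sigma_pow_eq)
  qed
  note split = common_part_split[OF e ce]
  note below = rel_slope_agree_below[OF e(1,1), where k = "common_exp x y" and d = i, OF refl]
  show "rel_slope x x i = rel_slope (fst (common_part x y)) (fst (common_part x y)) i"
    using below(1) moved split(1) by simp
  show "fission x y < rel_slope x x i"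
    using below(2) moved split(1,5) by fastforce
qed

lemma rel_slope_compatible:
  assumes e: "is_efac x" "is_efac y" and comp: "compatible x y"
  shows "rel_slope x y d = max (rel_slope x x d) (fission x y)"
proof (cases "sigma_pow d (fst (common_part x y)) = fst (common_part x y)")
  case True
  then have "rel_slope x y d = fission x y"
    using rel_slope_eq_fission[OF e] comp unfolding compatible_def by simp
  then show ?thesis using rel_slope_self_le_fission[OF e True] by simp
next
  case False
  note moved = rel_slope_self_moved[OF e False]
  note split = common_part_split[OF e moved(1)]
  have "trunc (common_exp x y) x = trunc (common_exp x y) y"
    using comp split(1,2) unfolding compatible_def by simp
  then have "y m = x m" if "common_exp x y \<le> m" for m
    using that by (metis trunc_def)
  from rel_slope_agree_below(1)[OF e this] have "rel_slope x y d = rel_slope x x d"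
    using False moved(2) split(1) by simp
  then show ?thesis using moved(3) by simp
qed

lemma levels_common_part:
  assumes e: "is_efac x" "is_efac y"
  shows "levels (fst (common_part x y)) = {v \<in> levels x. fission x y < v}"
proof -
  define c where "c = fst (common_part x y)"
  have moved: "sigma_pow i c \<noteq> c" if "rel_slope c c i \<noteq> 0" for i
    using that by (auto simp: rel_slope_def)
  show ?thesis unfolding c_def[symmetric]
  proof (intro set_eqI iffI)
    fix v assume "v \<in> levels c"
    then obtain i where v: "v = rel_slope c c i" "v \<noteq> 0" unfolding levels_eq_rel_slope by auto
    note l = rel_slope_self_moved[OF e moved[OF v(2)[unfolded v(1)], unfolded c_def]]
    show "v \<in> {v \<in> levels x. fission x y < v}"
      using l(2,3) v unfolding levels_eq_rel_slope c_def by (auto intro!: exI[of _ i])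
  next
    fix v assume "v \<in> {v \<in> levels x. fission x y < v}"
    then obtain i where v: "v = rel_slope x x i" "v \<noteq> 0" "fission x y < v"
      unfolding levels_eq_rel_slope by auto
    then have "sigma_pow i c \<noteq> c" using rel_slope_self_le_fission[OF e] unfolding c_def by fastforce
    then have "v = rel_slope c c i" using rel_slope_self_moved(2)[OF e] v(1) unfolding c_def by simp
    then show "v \<in> levels c" using v(2) unfolding levels_eq_rel_slope by auto
  qed
qed

definition max_moved_level :: "rat set \<Rightarrow> int \<Rightarrow> rat" where
  "max_moved_level L d = (if {l \<in> L. zeta d l \<noteq> 1} = {} then 0 else Max {l \<in> L. zeta d l \<noteq> 1})"

lemma rel_slope_self_eq_max_moved_level:
  assumes e: "is_efac x"
  shows "rel_slope x x d = max_moved_level (levels x) d"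
proof -
  define D where "D = sigma_pow d x - x"
  have Dm: "\<And>m. D m = (zeta d m - 1) * x m" by (simp add: D_def sigma_pow_eq algebra_simps)
  have eD: "is_efac D" unfolding D_def by (intro is_efac_diff is_efac_sigma_pow e)
  define S where "S = {l \<in> levels x. zeta d l \<noteq> 1}"
  have fS: "finite S" unfolding S_def using levels_subset_expos[OF e] is_efac_finite[OF e]
    by (auto intro: finite_subset)
  have D_S: "D l \<noteq> 0" if "l \<in> S" for l
    using that levels_subset_expos[OF e] unfolding S_def by (auto simp: expos_iff Dm)
  show ?thesis
  proof (cases "D = (\<lambda>_. 0)")
    case True
    then have "S = {}" using D_S by auto
    then show ?thesis unfolding max_moved_level_def S_def[symmetric] rel_slope_def D_def[symmetric]
      using True by simp
  next
    case False
    define v where "v = slope D"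
    have Dv: "D v \<noteq> 0" using coeff_slope_nonzero[OF is_efac_finite[OF eD]] False v_def by blast
    then have "zeta d v \<noteq> 1" by (auto simp: Dm)
    moreover have "v \<in> levels x"
      using is_efac_pos[OF eD Dv] unfolding levels_eq_rel_slope rel_slope_def v_def D_def
      by (auto intro!: exI[of _ d])
    ultimately have vS: "v \<in> S" unfolding S_def by simp
    have "Max S = v"
      by (rule Max_eqI[OF fS _ vS]) (use D_S slope_ge[OF is_efac_finite[OF eD]] v_def in blast)
    then show ?thesis unfolding max_moved_level_def S_def[symmetric] rel_slope_def D_def[symmetric]
      using vS v_def by auto
  qed
qed

lemma rel_slope_eq_periodic:
  assumes px: "sigma_pow (int r) x = x" and px': "sigma_pow (int r) x' = x'" and r: "1 \<le> r"
    and eq: "\<And>k. k \<le> r \<Longrightarrow> rel_slope x' y' (int k) = rel_slope x y (int k)"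
  shows "rel_slope x' y' d = rel_slope x y d"
proof -
  have "0 \<le> d mod int r" "d mod int r < int r" using r by simp_all
  then have "nat (d mod int r) \<le> r" by linarith
  with eq have "rel_slope x' y' (d mod int r) = rel_slope x y (d mod int r)"
    using \<open>0 \<le> d mod int r\<close> by (metis int_nat_eq)
  then show ?thesis using rel_slope_mod[OF px] rel_slope_mod[OF px'] by metis
qed

section \<open>Equivalence of pointed irregular types with two factors\<close>

lemma irr_equiv_of_levels_fission:
  assumes e: "is_efac q" "is_efac qh" "is_efac q'" "is_efac qh'"
    and comp: "compatible q qh" "compatible q' qh'"
    and lev: "levels q' = levels q" "levels qh' = levels qh" and fis: "fission q' qh' = fission q qh"
  shows "irr_equiv [(n, q'), (nh, qh')] [(n, q), (nh, qh)]"
proof -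
  have g00: "rel_slope q' q' d = rel_slope q q d" for d
    by (simp only: rel_slope_self_eq_max_moved_level e lev)
  have g11: "rel_slope qh' qh' d = rel_slope qh qh d" for d
    by (simp only: rel_slope_self_eq_max_moved_level e lev)
  have g01: "rel_slope q' qh' d = rel_slope q qh d" for d
    by (simp only: rel_slope_compatible[OF e(3,4) comp(2)] rel_slope_compatible[OF e(1,2) comp(1)] g00 fis)
  have g10: "rel_slope qh' q' d = rel_slope qh q d" for d
    by (simp only: rel_slope_commute[of qh'] rel_slope_commute[of qh] g01)
  have "slope (sigma_pow (int k) (snd ([(n, q'), (nh, qh')] ! i)) - sigma_pow (int l) (snd ([(n, q'), (nh, qh')] ! j)))
      = slope (sigma_pow (int k) (snd ([(n, q), (nh, qh)] ! i)) - sigma_pow (int l) (snd ([(n, q), (nh, qh)] ! j)))"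
    if "i < 2" "j < 2" for i j k l
  proof -
    have "i = 0 \<or> i = 1" "j = 0 \<or> j = 1" using that by auto
    then show ?thesis
      by (elim disjE) (simp_all only: slope_sigma_pow_diff g00 g11 g01 g10 nth_Cons_0 nth_Cons_Suc One_nat_def snd_conv)
  qed
  moreover have "fst ([(n, q'), (nh, qh')] ! i) = fst ([(n, q), (nh, qh)] ! i)" if "i < 2" for i
    using that less_2_cases by fastforce
  ultimately show ?thesis unfolding irr_equiv_def by simp
qed

lemma levels_fission_of_irr_equiv:
  assumes e: "is_efac q" "is_efac qh" "is_efac q'" "is_efac qh'"
    and dist: "distinct_orbits q qh" and comp: "compatible q qh"
    and eqv: "irr_equiv [(n, q'), (nh, qh')] [(n, q), (nh, qh)]"
  shows "distinct_orbits q' qh'" "compatible q' qh'" "levels q' = levels q"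
    and "levels qh' = levels qh" "fission q' qh' = fission q qh"
proof -
  have H: "\<forall>i<2. \<forall>j<2. \<forall>k\<le>ram (snd ([(n, q), (nh, qh)] ! i)). \<forall>l\<le>ram (snd ([(n, q), (nh, qh)] ! j)).
      slope (sigma_pow (int k) (snd ([(n, q'), (nh, qh')] ! i)) - sigma_pow (int l) (snd ([(n, q'), (nh, qh')] ! j)))
        = slope (sigma_pow (int k) (snd ([(n, q), (nh, qh)] ! i)) - sigma_pow (int l) (snd ([(n, q), (nh, qh)] ! j)))"
    using eqv unfolding irr_equiv_def by simp
  have r: "1 \<le> ram q" "sigma_pow (int (ram q)) q = q" using ram_period[OF e(1)] by auto
  have rh: "1 \<le> ram qh" "sigma_pow (int (ram qh)) qh = qh" using ram_period[OF e(2)] by auto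
  have p00: "rel_slope q' q' (int k) = rel_slope q q (int k)" if "k \<le> ram q" for k
    using H[rule_format, of 0 0 k 0] that by (simp add: rel_slope_def)
  have p11: "rel_slope qh' qh' (int k) = rel_slope qh qh (int k)" if "k \<le> ram qh" for k
    using H[rule_format, of 1 1 k 0] that by (simp add: rel_slope_def)
  have p01: "rel_slope q' qh' (int k) = rel_slope q qh (int k)" if "k \<le> ram q" for k
    using H[rule_format, of 0 1 k 0] that by (simp add: rel_slope_def)
  have "rel_slope q' q' (int (ram q)) = 0"
    using p00[of "ram q"] r rel_slope_eq_0_iff[OF e(1,1)] by simp
  then have per: "sigma_pow (int (ram q)) q' = q'" using rel_slope_eq_0_iff[OF e(3,3)] by metis
  have g00: "rel_slope q' q' d = rel_slope q q d" for d
    by (rule rel_slope_eq_periodic[OF r(2) per r(1) p00])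
  have "rel_slope qh' qh' (int (ram qh)) = 0"
    using p11[of "ram qh"] rh rel_slope_eq_0_iff[OF e(2,2)] by simp
  then have per_h: "sigma_pow (int (ram qh)) qh' = qh'" using rel_slope_eq_0_iff[OF e(4,4)] by metis
  have g11: "rel_slope qh' qh' d = rel_slope qh qh d" for d
    by (rule rel_slope_eq_periodic[OF rh(2) per_h rh(1) p11])
  have g01: "rel_slope q' qh' d = rel_slope q qh d" for d
    by (rule rel_slope_eq_periodic[OF r(2) per r(1) p01])
  show "levels q' = levels q" "levels qh' = levels qh"
    unfolding levels_eq_rel_slope g00 g11 by simp_all
  show "distinct_orbits q' qh'" unfolding distinct_orbits_def
  proof
    assume "stokes q' = stokes qh'"
    then obtain j where "qh' = sigma_pow j q'" using stokes_eqD by blast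
    then have "rel_slope q qh j = 0" using g01[of j] rel_slope_eq_0_iff[OF e(3,4)] by metis
    then have "qh = sigma_pow j q" using rel_slope_eq_0_iff[OF e(1,2)] by blast
    then show False using dist stokes_sigma_pow unfolding distinct_orbits_def by simp
  qed
  have cross: "rel_slope q' qh' d = max (rel_slope q' q' d) (fission q qh)" for d
    using rel_slope_compatible[OF e(1,2) comp] g01 g00 by simp
  have "rel_slope q qh 0 = fission q qh"
    using rel_slope_eq_fission[OF e(1,2)] comp unfolding compatible_def by simp
  then have g0: "rel_slope q' qh' 0 = fission q qh"
    using cross[of 0] rel_slope_nonneg[OF e(1,2), of 0] by simp
  show comp': "compatible q' qh'"
  proof (rule ccontr)
    assume nc: "\<not> compatible q' qh'"
    then have ce: "common_exists q' qh'" using common_part_none unfolding compatible_def by metis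
    have lt: "fission q' qh' < fission q qh"
      using fission_less_rel_slope[OF e(3,4), of 0] nc g0 unfolding compatible_def by simp
    obtain j where "trunc (common_exp q' qh') qh' = sigma_pow j (trunc (common_exp q' qh') q')"
      using common_part_split(6)[OF e(3,4) ce] stokes_eqD by blast
    then have "rel_slope q' qh' j = fission q' qh'"
      using rel_slope_eq_fission[OF e(3,4)] common_part_split(1,2)[OF e(3,4) ce] by simp
    then show False using cross[of j] lt by simp
  qed
  show "fission q' qh' = fission q qh"
    using rel_slope_eq_fission[OF e(3,4)] comp' g0 unfolding compatible_def by simp
qed

lemma irr_equiv_pair_shape:
  assumes wf: "wf_list Q'" and eqv: "irr_equiv Q' [(n, q), (nh, qh)]"
  obtains q' qh' where "Q' = [(n, q'), (nh, qh')]" "is_efac q'" "is_efac qh'"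
proof -
  have "length Q' = 2" using eqv unfolding irr_equiv_def by simp
  then obtain a b where ab: "Q' = [a, b]" by (auto simp: numeral_2_eq_2 length_Suc_conv)
  have "fst a = n" "fst b = nh" using eqv ab unfolding irr_equiv_def by auto
  then have "Q' = [(n, snd a), (nh, snd b)]" using ab by (simp add: prod_eq_iff)
  moreover have "is_efac (snd a)" "is_efac (snd b)" using wf ab unfolding wf_list_def by auto
  ultimately show ?thesis using that by blast
qed

theorem mainTheorem5:
  fixes n nh :: nat and q qh :: efac
  assumes Q: "pointed_irr_type [(n, q), (nh, qh)]"
    and comp: "compatible q qh"
  shows "(\<forall>Q'. wf_list Q' \<longrightarrow>
            (irr_equiv Q' [(n, q), (nh, qh)] \<longleftrightarrow>
              (\<exists>q' qh'. Q' = [(n, q'), (nh, qh')] \<and> is_efac q' \<and> is_efac qh' \<and>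
                 distinct_orbits q' qh' \<and> compatible q' qh' \<and>
                 levels q' = levels q \<and> levels qh' = levels qh \<and>
                 levels (fst (common_part q' qh')) = levels (fst (common_part q qh)) \<and>
                 fission q' qh' = fission q qh)))
       \<and> (\<forall>q' qh'. is_efac q' \<longrightarrow> is_efac qh' \<longrightarrow> distinct_orbits q' qh' \<longrightarrow> compatible q' qh' \<longrightarrow>
            ((levels q' = levels q \<and> levels qh' = levels qh \<and>
              levels (fst (common_part q' qh')) = levels (fst (common_part q qh)) \<and>
              fission q' qh' = fission q qh)
             \<longleftrightarrow> (levels q' = levels q \<and> levels qh' = levels qh \<and> fission q' qh' = fission q qh)))"
proof -
  have e: "is_efac q" "is_efac qh" using Q unfolding pointed_irr_type_def wf_list_def by auto
  have dist: "distinct_orbits q qh" using Q unfolding pointed_irr_type_def by force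
  have common_redundant: "levels (fst (common_part q' qh')) = levels (fst (common_part q qh))"
    if "is_efac q'" "is_efac qh'" "levels q' = levels q" "fission q' qh' = fission q qh" for q' qh'
    using that levels_common_part[OF e] levels_common_part[OF that(1,2)] by simp
  have "irr_equiv Q' [(n, q), (nh, qh)] \<longleftrightarrow>
      (\<exists>q' qh'. Q' = [(n, q'), (nh, qh')] \<and> is_efac q' \<and> is_efac qh' \<and>
        distinct_orbits q' qh' \<and> compatible q' qh' \<and> levels q' = levels q \<and> levels qh' = levels qh \<and>
        levels (fst (common_part q' qh')) = levels (fst (common_part q qh)) \<and> fission q' qh' = fission q qh)"
    (is "?equiv \<longleftrightarrow> ?described") if wf: "wf_list Q'" for Q'
  proof
    assume eqv: "irr_equiv Q' [(n, q), (nh, qh)]"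
    then obtain q' qh' where pair: "Q' = [(n, q'), (nh, qh')]" "is_efac q'" "is_efac qh'"
      using irr_equiv_pair_shape[OF wf eqv] by blast
    note equiv_facts = levels_fission_of_irr_equiv[OF e pair(2,3) dist comp eqv[unfolded pair(1)]]
    show ?described using pair equiv_facts common_redundant[OF pair(2,3) equiv_facts(3,5)] by blast
  qed (use irr_equiv_of_levels_fission[OF e _ _ comp] in blast)
  then show ?thesis using common_redundant by blast
qed

end
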